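(* Let $R$ be a Noetherian ring. Then the set $\mathrm{Princ}(R)$ of principal ideals of $R$ is dense in $\mathcal I(R)$ with respect to the constructible topology if and only if $R$ is a principal ideal ring.
   Context: $\mathcal I(R)$ is the set of ideals of $R$ with the Zariski topology having basis of open sets $\mathcal B(x_1,\ldots,x_n):=\{I\in\mathcal I(R)\mid x_1,\ldots,x_n\in I\}$; it is a spectral space. The constructible topology is the coarsest topology in which all open quasi-compact subsets of $\mathcal I(R)$ are clopen. *)

theory Defs
  imports "HOL-Analysis.Abstract_Topology" "HOL-Algebra.Ring_Divisibility"
begin

definition ideals_of :: "('a, 'b) ring_scheme \<Rightarrow> 'a set set" where
  "ideals_of R = {I. ideal I R}"

definition Princ :: "('a, 'b) ring_scheme \<Rightarrow> 'a set set" where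
  "Princ R = {I. principalideal I R}"

definition zariski_basic :: "('a, 'b) ring_scheme \<Rightarrow> 'a set \<Rightarrow> 'a set set" where
  "zariski_basic R F = {I \<in> ideals_of R. F \<subseteq> I}"

definition zariski_top :: "('a, 'b) ring_scheme \<Rightarrow> 'a set topology" where
  "zariski_top R = topology_generated_by
     {zariski_basic R F | F. finite F \<and> F \<subseteq> carrier R}"

text \<open>Constructible topology: the coarsest topology on I(R) in which every
  open quasi-compact subset of the Zariski topology is clopen, i.e. the topology
  generated by these sets and their complements.\<close>
definition constructible_top :: "('a, 'b) ring_scheme \<Rightarrow> 'a set topology" where
  "constructible_top R = topology_generated_by
     (\<Union>{{U, ideals_of R - U} | U. openin (zariski_top R) U \<and> compactin (zariski_top R) U})"

definition principal_ideal_ring :: "('a, 'b) ring_scheme \<Rightarrow> bool" where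
  "principal_ideal_ring R \<longleftrightarrow> cring R \<and> (\<forall>I. ideal I R \<longrightarrow> principalideal I R)"

end

theory Submission
  imports Defs
begin

text \<open>If R is not a principal ideal ring, the ascending chain condition yields an ideal M
  maximal among the non-principal ideals, and M is then a maximal ideal. Indeed, if
  M \<subset> (x) \<subset> R, maximality forces (M : x) = M, i.e. M = x M; the ascending chain condition turns
  this into an element u \<equiv> 1 mod (x) annihilating M, and writing M + (u) = (a + s u) with
  a \<in> M gives M = (a), which is absurd. Since M = Idl A with A finite, B(A) minus B(1) is a
  constructible open neighbourhood of M; a principal ideal in it would be a proper ideal
  containing M, hence equal to M.\<close>

definition maximal_nonprincipal :: "'a set \<Rightarrow> ('a, 'b) ring_scheme \<Rightarrow> bool" where
  "maximal_nonprincipal M R \<longleftrightarrow> ideal M R \<and> \<not> principalideal M R \<and>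
     (\<forall>J. ideal J R \<longrightarrow> M \<subset> J \<longrightarrow> principalideal J R)"

lemma (in cring) principalideal_iff: "principalideal I R \<longleftrightarrow> (\<exists>i\<in>carrier R. I = PIdl i)"
  by (metis cgenideal_eq_genideal cgenideal_is_principalideal principalideal.generate)

lemma (in noetherian_ring) ex_maximal_ideal:
  assumes "S \<noteq> {}" and "S \<subseteq> {I. ideal I R}"
  shows "\<exists>M\<in>S. \<forall>J\<in>S. M \<subseteq> J \<longrightarrow> J = M"
proof (rule subset_Zorn_nonempty[OF assms(1)])
  fix C assume "C \<noteq> {}" and "subset.chain S C"
  then have "subset.chain {I. ideal I R} C"
    using assms(2) by (auto simp: pred_on.chain_def)
  with \<open>C \<noteq> {}\<close> have "\<Union>C \<in> C" by (rule ideal_chain_is_trivial)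
  then show "\<Union>C \<in> S" using \<open>subset.chain S C\<close> by (auto simp: pred_on.chain_def)
qed

lemma (in noetherian_ring) ex_maximal_nonprincipal:
  assumes "ideal I R" and "\<not> principalideal I R"
  shows "\<exists>M. I \<subseteq> M \<and> maximal_nonprincipal M R"
proof -
  let ?S = "{J. ideal J R \<and> \<not> principalideal J R \<and> I \<subseteq> J}"
  have "?S \<noteq> {}" using assms by blast
  then obtain M where M: "M \<in> ?S" and max: "\<forall>J\<in>?S. M \<subseteq> J \<longrightarrow> J = M"
    using ex_maximal_ideal[of ?S] by blast
  have "principalideal J R" if "ideal J R" and "M \<subset> J" for J
  proof (rule ccontr)
    assume "\<not> principalideal J R"
    with M that have "J \<in> ?S" by blast
    with max \<open>M \<subset> J\<close> show False by blast
  qed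
  with M show ?thesis unfolding maximal_nonprincipal_def by blast
qed

lemma (in noetherian_ring) ideal_incseq_stabilizes:
  assumes "\<And>n. ideal (I n) R" and "\<And>n. I n \<subseteq> I (Suc n)"
  shows "\<exists>N. I (Suc N) = I N"
proof -
  obtain N where "\<forall>J\<in>range I. I N \<subseteq> J \<longrightarrow> J = I N"
    using ex_maximal_ideal[of "range I"] assms(1) by blast
  then show ?thesis using assms(2) by blast
qed

lemma (in cring) maximal_nonprincipal_colon_eq:
  assumes M: "maximal_nonprincipal M R" and z: "z \<in> carrier R" and "M \<subseteq> PIdl z"
  shows "{y \<in> carrier R. z \<otimes> y \<in> M} = M"
proof (rule ccontr)
  define L where "L = {y \<in> carrier R. z \<otimes> y \<in> M}"
  assume "L \<noteq> M"
  have M_ideal: "ideal M R" using M unfolding maximal_nonprincipal_def by blast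
  have "ideal L R" unfolding L_def using ideal.helper_max_prime[OF M_ideal is_cring z] .
  moreover have "M \<subseteq> L"
    unfolding L_def using ideal.I_l_closed[OF M_ideal _ z] ideal.Icarr[OF M_ideal] by blast
  ultimately have "principalideal L R"
    using M \<open>L \<noteq> M\<close> unfolding maximal_nonprincipal_def by blast
  then obtain b where b: "b \<in> carrier R" "L = PIdl b" using principalideal_iff by blast
  have "M = PIdl (b \<otimes> z)"
  proof
    show "M \<subseteq> PIdl (b \<otimes> z)"
    proof
      fix i assume i: "i \<in> M"
      then obtain r where r: "r \<in> carrier R" "i = r \<otimes> z"
        using \<open>M \<subseteq> PIdl z\<close> unfolding cgenideal_def by blast
      then have "r \<in> L" unfolding L_def using i z m_comm by auto
      then obtain s where s: "s \<in> carrier R" "r = s \<otimes> b"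
        using b unfolding cgenideal_def by blast
      then have "i = s \<otimes> (b \<otimes> z)" using r b z m_assoc by auto
      then show "i \<in> PIdl (b \<otimes> z)" unfolding cgenideal_def using s by blast
    qed
    have "b \<in> L" using b cgenideal_self by blast
    then have "b \<otimes> z \<in> M" unfolding L_def using m_comm z by auto
    then show "PIdl (b \<otimes> z) \<subseteq> M" using cgenideal_minimal M_ideal by blast
  qed
  moreover have "principalideal (PIdl (b \<otimes> z)) R"
    using b z by (simp add: cgenideal_is_principalideal)
  ultimately show False using M unfolding maximal_nonprincipal_def by simp
qed

lemma (in cring) maximal_nonprincipal_divisible:
  assumes "maximal_nonprincipal M R" and "z \<in> carrier R" and "M \<subseteq> PIdl z"
  shows "M \<subseteq> (\<lambda>r. r \<otimes> z) ` M"
proof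
  fix i assume "i \<in> M"
  then obtain r where r: "r \<in> carrier R" "i = r \<otimes> z"
    using \<open>M \<subseteq> PIdl z\<close> unfolding cgenideal_def by blast
  then have "r \<in> {y \<in> carrier R. z \<otimes> y \<in> M}" using \<open>i \<in> M\<close> assms(2) m_comm by auto
  then show "i \<in> (\<lambda>r. r \<otimes> z) ` M"
    using r maximal_nonprincipal_colon_eq[OF assms] by blast
qed

lemma (in cring) one_minus_mult_mem:
  assumes J: "ideal J R" and u: "u \<in> carrier R" and v: "v \<in> carrier R"
    and "\<one> \<ominus> u \<in> J" and "\<one> \<ominus> v \<in> J"
  shows "\<one> \<ominus> u \<otimes> v \<in> J"
proof -
  have "\<one> \<ominus> u \<otimes> v = (\<one> \<ominus> u) \<oplus> u \<otimes> (\<one> \<ominus> v)"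
    using u v by algebra
  moreover have "u \<otimes> (\<one> \<ominus> v) \<in> J" using ideal.I_l_closed[OF J \<open>\<one> \<ominus> v \<in> J\<close> u] .
  ultimately show ?thesis
    using \<open>\<one> \<ominus> u \<in> J\<close> by (simp add: ideal.axioms(1)[OF J] additive_subgroup.a_closed)
qed

locale noetherian_cring = cring R + noetherian_ring R for R (structure)

lemma (in noetherian_cring) nakayama_elem:
  assumes x: "x \<in> carrier R" and MC: "M \<subseteq> carrier R"
    and div: "M \<subseteq> (\<lambda>r. r \<otimes> x) ` M" and i: "i \<in> M"
  shows "\<exists>u\<in>carrier R. \<one> \<ominus> u \<in> PIdl x \<and> u \<otimes> i = \<zero>"
proof -
  have "\<forall>j\<in>M. \<exists>r\<in>M. j = r \<otimes> x" using div by blast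
  then obtain g where gM: "\<And>j. j \<in> M \<Longrightarrow> g j \<in> M" and g_eq: "\<And>j. j \<in> M \<Longrightarrow> j = g j \<otimes> x"
    by metis
  define f where "f n = (g ^^ n) i" for n \<comment> \<open>a choice of i / x^n inside M\<close>
  have f_0: "f 0 = i" and f_Suc_eq: "f (Suc n) = g (f n)" for n
    by (simp_all add: f_def)
  have fM: "f n \<in> M" for n
    by (induction n) (simp_all add: f_0 f_Suc_eq i gM)
  then have fC: "f n \<in> carrier R" for n using MC by blast
  have f_Suc: "f n = f (Suc n) \<otimes> x" for n
    unfolding f_Suc_eq by (rule g_eq[OF fM])
  have i_eq: "i = f n \<otimes> x [^] n" for n
  proof (induction n)
    case 0 then show ?case using fC[of 0] by (simp add: f_0)
  next
    case (Suc n)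
    then show ?case
      using f_Suc[of n] fC x by (simp add: m_assoc m_comm[of x "x [^] n"])
  qed
  have "PIdl (f n) \<subseteq> PIdl (f (Suc n))" for n
  proof (rule cgenideal_minimal[OF cgenideal_ideal[OF fC]])
    have "f n = x \<otimes> f (Suc n)" using f_Suc[of n] m_comm[OF fC x] by simp
    then show "f n \<in> PIdl (f (Suc n))" unfolding cgenideal_def using x by blast
  qed
  then obtain N where "PIdl (f (Suc N)) = PIdl (f N)"
    using ideal_incseq_stabilizes[of "\<lambda>n. PIdl (f n)"] cgenideal_ideal[OF fC] by blast
  then have "f (Suc N) \<in> PIdl (f N)" using cgenideal_self[OF fC] by blast
  then obtain r where r: "r \<in> carrier R" "f (Suc N) = r \<otimes> f N"
    unfolding cgenideal_def by blast
  define u where "u = \<one> \<ominus> r \<otimes> x"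
  have u: "u \<in> carrier R" using r x by (simp add: u_def)
  have "\<one> \<ominus> u = r \<otimes> x" using r x unfolding u_def by algebra
  then have "\<one> \<ominus> u \<in> PIdl x" unfolding cgenideal_def using r by blast
  moreover have "u \<otimes> i = \<zero>"
  proof -
    have "u \<otimes> f (Suc N) = f (Suc N) \<ominus> r \<otimes> (f (Suc N) \<otimes> x)"
      using r x fC unfolding u_def by algebra
    also have "\<dots> = f (Suc N) \<ominus> f (Suc N)" by (simp only: f_Suc[of N, symmetric] r(2)[symmetric])
    also have "\<dots> = \<zero>" using fC by (simp add: r_neg minus_eq)
    finally have "u \<otimes> f (Suc N) = \<zero>" .
    moreover have "u \<otimes> i = (u \<otimes> f (Suc N)) \<otimes> x [^] Suc N"
      by (subst i_eq[of "Suc N"]) (use u fC x in \<open>simp add: m_assoc\<close>)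
    ultimately show ?thesis using x by simp
  qed
  ultimately show ?thesis using u by blast
qed

lemma (in noetherian_cring) nakayama_finite:
  assumes x: "x \<in> carrier R" and MC: "M \<subseteq> carrier R"
    and div: "M \<subseteq> (\<lambda>r. r \<otimes> x) ` M" and "finite A" and "A \<subseteq> M"
  shows "\<exists>u\<in>carrier R. \<one> \<ominus> u \<in> PIdl x \<and> (\<forall>a\<in>A. u \<otimes> a = \<zero>)"
  using \<open>finite A\<close> \<open>A \<subseteq> M\<close>
proof (induction A rule: finite_induct)
  case empty
  have "\<one> \<ominus> \<one> \<in> PIdl x"
    using additive_subgroup.zero_closed[OF ideal.axioms(1)[OF cgenideal_ideal[OF x]]]
    by (simp add: r_neg minus_eq)
  then show ?case by blast
next
  case (insert a A)
  obtain u where u: "u \<in> carrier R" "\<one> \<ominus> u \<in> PIdl x" "\<forall>b\<in>A. u \<otimes> b = \<zero>"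
    using insert by blast
  obtain v where v: "v \<in> carrier R" "\<one> \<ominus> v \<in> PIdl x" "v \<otimes> a = \<zero>"
    using nakayama_elem[OF x MC div] insert.prems by blast
  have "\<one> \<ominus> u \<otimes> v \<in> PIdl x"
    using one_minus_mult_mem[OF cgenideal_ideal[OF x] u(1) v(1) u(2) v(2)] .
  moreover have "(u \<otimes> v) \<otimes> b = \<zero>" if "b \<in> insert a A" for b
  proof -
    have b: "b \<in> carrier R" using that insert.prems MC by blast
    show ?thesis
    proof (cases "b = a")
      case True
      then show ?thesis using u(1) v b by (simp add: m_assoc)
    next
      case False
      then have "u \<otimes> b = \<zero>" using that u(3) by simp
      moreover have "(u \<otimes> v) \<otimes> b = v \<otimes> (u \<otimes> b)" using u(1) v(1) b by (simp add: m_ac)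
      ultimately show ?thesis using v(1) by simp
    qed
  qed
  ultimately show ?case using u(1) v(1) by blast
qed

lemma (in noetherian_cring) nakayama:
  assumes M: "ideal M R" and x: "x \<in> carrier R" and div: "M \<subseteq> (\<lambda>r. r \<otimes> x) ` M"
  shows "\<exists>u\<in>carrier R. \<one> \<ominus> u \<in> PIdl x \<and> (\<forall>m\<in>M. u \<otimes> m = \<zero>)"
proof -
  obtain A where A: "A \<subseteq> carrier R" "finite A" "M = Idl A" using finetely_gen[OF M] by blast
  have "A \<subseteq> M" using A genideal_self by blast
  then obtain u where u: "u \<in> carrier R" "\<one> \<ominus> u \<in> PIdl x" "\<forall>a\<in>A. u \<otimes> a = \<zero>"
    using nakayama_finite[OF x _ div A(2)] ideal.Icarr[OF M] by blast
  have "ideal {y \<in> carrier R. u \<otimes> y \<in> {\<zero>}} R"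
    by (rule ideal.helper_max_prime[OF zeroideal is_cring u(1)])
  then have "Idl A \<subseteq> {y \<in> carrier R. u \<otimes> y \<in> {\<zero>}}"
    by (rule genideal_minimal) (use A(1) u(3) in blast)
  then show ?thesis using u A(3) by blast
qed

lemma (in cring) maximal_nonprincipal_annihilator_subset:
  assumes M: "maximal_nonprincipal M R" and u: "u \<in> carrier R" and ann: "\<forall>m\<in>M. u \<otimes> m = \<zero>"
  shows "u \<in> M"
proof (rule ccontr)
  assume "u \<notin> M"
  have M_ideal: "ideal M R" and M_nonprincipal: "\<not> principalideal M R"
    using M unfolding maximal_nonprincipal_def by blast+
  have MC: "M \<subseteq> carrier R" using ideal.Icarr[OF M_ideal] by blast
  let ?K = "M <+>\<^bsub>R\<^esub> PIdl u"
  have "M \<subseteq> ?K"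
  proof
    fix m assume "m \<in> M"
    moreover have "\<zero> \<in> PIdl u"
      using additive_subgroup.zero_closed[OF ideal.axioms(1)[OF cgenideal_ideal[OF u]]] .
    ultimately have "m \<oplus> \<zero> \<in> ?K" unfolding set_add_def' by blast
    then show "m \<in> ?K" using \<open>m \<in> M\<close> MC by auto
  qed
  moreover have "u \<in> ?K"
  proof -
    have "\<zero> \<oplus> u \<in> ?K"
      using additive_subgroup.zero_closed[OF ideal.axioms(1)[OF M_ideal]] cgenideal_self[OF u]
      unfolding set_add_def' by blast
    then show ?thesis using u by simp
  qed
  ultimately have "principalideal ?K R"
    using M \<open>u \<notin> M\<close> add_ideals[OF M_ideal cgenideal_ideal[OF u]]
    unfolding maximal_nonprincipal_def by blast
  then obtain z where z: "z \<in> carrier R" "?K = PIdl z" using principalideal_iff by blast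
  then have "z \<in> ?K" using cgenideal_self by blast
  then obtain a s where a: "a \<in> M" and s: "s \<in> carrier R" and z_eq: "z = a \<oplus> s \<otimes> u"
    unfolding set_add_def' cgenideal_def by blast
  have div: "M \<subseteq> (\<lambda>r. r \<otimes> z) ` M"
    using maximal_nonprincipal_divisible[OF M z(1)] \<open>M \<subseteq> ?K\<close> z(2) by blast
  have "M \<subseteq> PIdl a"
  proof
    fix i assume "i \<in> M"
    then obtain r where r: "r \<in> M" "i = r \<otimes> z" using div by blast
    have rC: "r \<in> carrier R" and aC: "a \<in> carrier R" using r(1) a MC by blast+
    have "r \<otimes> z = r \<otimes> a \<oplus> s \<otimes> (u \<otimes> r)"
      unfolding z_eq using rC aC s u by algebra
    also have "\<dots> = r \<otimes> a" using ann r(1) rC aC s by simp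
    finally show "i \<in> PIdl a" unfolding cgenideal_def using r(2) rC by blast
  qed
  then have "M = PIdl a" using cgenideal_minimal[OF M_ideal a] by blast
  then show False
    using M_nonprincipal cgenideal_is_principalideal a MC by auto
qed

lemma (in noetherian_cring) maximal_nonprincipal_imp_maximalideal:
  assumes M: "maximal_nonprincipal M R"
  shows "maximalideal M R"
proof (rule maximalidealI)
  show M_ideal: "ideal M R" using M unfolding maximal_nonprincipal_def by blast
  show "carrier R \<noteq> M" using M onepideal unfolding maximal_nonprincipal_def by blast
  fix J assume J: "ideal J R" "M \<subseteq> J" "J \<subseteq> carrier R"
  show "J = M \<or> J = carrier R"
  proof (rule ccontr)
    assume "\<not> (J = M \<or> J = carrier R)"
    then have "M \<subset> J" and one: "\<one> \<notin> J"
      using J(2) ideal.one_imp_carrier[OF J(1)] by blast+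
    then have "principalideal J R" using M J(1) unfolding maximal_nonprincipal_def by blast
    then obtain x where x: "x \<in> carrier R" "J = PIdl x" using principalideal_iff by blast
    have "M \<subseteq> (\<lambda>r. r \<otimes> x) ` M"
      using maximal_nonprincipal_divisible[OF M x(1)] J(2) x(2) by blast
    then obtain u where u: "u \<in> carrier R" "\<one> \<ominus> u \<in> J" "\<forall>m\<in>M. u \<otimes> m = \<zero>"
      using nakayama[OF M_ideal x(1)] x(2) by blast
    have "u \<in> J" using maximal_nonprincipal_annihilator_subset[OF M u(1,3)] J(2) by blast
    then have "(\<one> \<ominus> u) \<oplus> u \<in> J"
      using u(2) additive_subgroup.a_closed[OF ideal.axioms(1)[OF J(1)]] by blast
    moreover have "(\<one> \<ominus> u) \<oplus> u = \<one>" using u(1) by algebra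
    ultimately show False using one by simp
  qed
qed

lemma topspace_zariski_top: "topspace (zariski_top R) = ideals_of R"
proof -
  have "zariski_basic R {} = ideals_of R" unfolding zariski_basic_def by blast
  then have "\<Union>{zariski_basic R F | F. finite F \<and> F \<subseteq> carrier R} = ideals_of R"
    unfolding zariski_basic_def by blast
  then show ?thesis unfolding zariski_top_def by simp
qed

lemma openin_zariski_top_upward:
  assumes "openin (zariski_top R) U" and "J \<in> U" and "ideal K R" and "J \<subseteq> K"
  shows "K \<in> U"
proof -
  have "generate_topology_on {zariski_basic R F | F. finite F \<and> F \<subseteq> carrier R} U"
    using assms(1) unfolding zariski_top_def openin_topology_generated_by_iff .
  then show ?thesis using assms(2-4)
  proof (induction arbitrary: J)
    case (Basis s)
    then show ?case unfolding zariski_basic_def ideals_of_def by blast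
  qed blast+
qed

lemma openin_zariski_basic:
  assumes "finite F" and "F \<subseteq> carrier R"
  shows "openin (zariski_top R) (zariski_basic R F)"
  unfolding zariski_top_def openin_topology_generated_by_iff
  by (rule generate_topology_on.Basis) (use assms in blast)

lemma (in ring) compactin_zariski_basic:
  assumes F: "finite F" "F \<subseteq> carrier R"
  shows "compactin (zariski_top R) (zariski_basic R F)"
  unfolding compactin_def
proof (intro conjI allI impI)
  show "zariski_basic R F \<subseteq> topspace (zariski_top R)"
    unfolding topspace_zariski_top zariski_basic_def by blast
  fix \<U> assume \<U>: "(\<forall>U\<in>\<U>. openin (zariski_top R) U) \<and> zariski_basic R F \<subseteq> \<Union>\<U>"
  have "Idl F \<in> zariski_basic R F"
    unfolding zariski_basic_def ideals_of_def using genideal_ideal[OF F(2)] genideal_self[OF F(2)] by blast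
  then obtain U where U: "U \<in> \<U>" "Idl F \<in> U" using \<U> by blast
  have "zariski_basic R F \<subseteq> U"
  proof
    fix K assume "K \<in> zariski_basic R F"
    then have K: "ideal K R" "F \<subseteq> K" unfolding zariski_basic_def ideals_of_def by blast+
    show "K \<in> U"
      using openin_zariski_top_upward[OF _ U(2) K(1) genideal_minimal[OF K]] \<U> U(1) by blast
  qed
  then show "\<exists>\<F>. finite \<F> \<and> \<F> \<subseteq> \<U> \<and> zariski_basic R F \<subseteq> \<Union>\<F>"
    using U(1) by (intro exI[of _ "{U}"]) blast
qed

lemma openin_constructible_top_basis:
  assumes "openin (zariski_top R) U" and "compactin (zariski_top R) U"
  shows "openin (constructible_top R) U" and "openin (constructible_top R) (ideals_of R - U)"
  unfolding constructible_top_def openin_topology_generated_by_iff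
  by (rule generate_topology_on.Basis, use assms in blast)+

lemma (in ring) topspace_constructible_top: "topspace (constructible_top R) = ideals_of R"
proof -
  have "openin (zariski_top R) (ideals_of R)" and "compactin (zariski_top R) (ideals_of R)"
    using openin_zariski_basic[of "{}" R] compactin_zariski_basic[of "{}"]
    by (simp_all add: zariski_basic_def)
  moreover have "U \<subseteq> ideals_of R" if "openin (zariski_top R) U" for U
    using openin_subset[OF that] by (simp add: topspace_zariski_top)
  ultimately have "\<Union>(\<Union>{{U, ideals_of R - U} | U. openin (zariski_top R) U \<and> compactin (zariski_top R) U})
      = ideals_of R"
    by blast
  then show ?thesis unfolding constructible_top_def by simp
qed

lemma (in ring) openin_constructible_top_basic_diff:
  assumes "finite F" "F \<subseteq> carrier R" "finite G" "G \<subseteq> carrier R"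
  shows "openin (constructible_top R) (zariski_basic R F - zariski_basic R G)"
proof -
  have "zariski_basic R F - zariski_basic R G = zariski_basic R F \<inter> (ideals_of R - zariski_basic R G)"
    unfolding zariski_basic_def by blast
  then show ?thesis
    using openin_constructible_top_basis[OF openin_zariski_basic compactin_zariski_basic] assms
    by (metis openin_Int)
qed

lemma (in ring) principal_superideal_if_in_closure_Princ:
  assumes "I \<in> constructible_top R closure_of Princ R"
    and "finite A" "A \<subseteq> carrier R" "I = Idl A" and "\<one> \<notin> I"
  shows "\<exists>P. principalideal P R \<and> I \<subseteq> P \<and> \<one> \<notin> P"
proof -
  let ?N = "zariski_basic R A - zariski_basic R {\<one>}"
  have "openin (constructible_top R) ?N"
    using openin_constructible_top_basic_diff assms(2,3) by simp
  moreover have "I \<in> ?N"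
    using assms(3-5) genideal_ideal genideal_self unfolding zariski_basic_def ideals_of_def by auto
  ultimately obtain P where "P \<in> Princ R" "P \<in> ?N"
    using assms(1) unfolding in_closure_of by blast
  then have "principalideal P R" "A \<subseteq> P" "\<one> \<notin> P"
    unfolding Princ_def zariski_basic_def by auto
  moreover have "I \<subseteq> P" using genideal_minimal[OF _ \<open>A \<subseteq> P\<close>] \<open>principalideal P R\<close> assms(4)
    by (simp add: principalideal.axioms(1))
  ultimately show ?thesis by blast
qed

lemma (in noetherian_cring) principal_ideal_ring_if_Princ_dense:
  assumes dense: "constructible_top R closure_of Princ R = topspace (constructible_top R)"
  shows "principal_ideal_ring R"
proof (rule ccontr)
  assume "\<not> principal_ideal_ring R"
  then obtain I where "ideal I R" "\<not> principalideal I R"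
    using is_cring unfolding principal_ideal_ring_def by blast
  then obtain M where M: "maximal_nonprincipal M R" using ex_maximal_nonprincipal by blast
  then have max: "maximalideal M R" by (rule maximal_nonprincipal_imp_maximalideal)
  then have M_ideal: "ideal M R" by (rule maximalideal.axioms(1))
  have "\<one> \<notin> M"
    using ideal.one_imp_carrier[OF M_ideal] maximalideal.I_notcarr[OF max] by metis
  obtain A where A: "A \<subseteq> carrier R" "finite A" "M = Idl A"
    using finetely_gen[OF M_ideal] by blast
  have "M \<in> constructible_top R closure_of Princ R"
    using dense M_ideal by (simp add: topspace_constructible_top ideals_of_def)
  then obtain P where P: "principalideal P R" "M \<subseteq> P" "\<one> \<notin> P"
    using principal_superideal_if_in_closure_Princ A \<open>\<one> \<notin> M\<close> by blast
  have P_ideal: "ideal P R" using P(1) by (rule principalideal.axioms(1))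
  then have "P = M \<or> P = carrier R"
    using maximalideal.I_maximal[OF max P_ideal P(2)] ideal.Icarr[OF P_ideal] by blast
  then show False using P M unfolding maximal_nonprincipal_def by auto
qed

theorem proposition5p7:
  fixes R :: "('a, 'b) ring_scheme"
  assumes "cring R" and "noetherian_ring R"
  shows "(constructible_top R) closure_of (Princ R) = topspace (constructible_top R)
         \<longleftrightarrow> principal_ideal_ring R"
proof
  interpret noetherian_cring R using assms by (rule noetherian_cring.intro)
  show "principal_ideal_ring R"
    if "constructible_top R closure_of Princ R = topspace (constructible_top R)"
    using that by (rule principal_ideal_ring_if_Princ_dense)
  show "constructible_top R closure_of Princ R = topspace (constructible_top R)"
    if "principal_ideal_ring R"
  proof -
    have "Princ R = ideals_of R"
      using that principalideal.axioms(1)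
      unfolding principal_ideal_ring_def Princ_def ideals_of_def by blast
    then show ?thesis
      using closure_of_topspace[of "constructible_top R"] by (simp add: topspace_constructible_top)
  qed
qed

end
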